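(* Let $\mathbb{M}$ be a flow monoid with idempotent addition, and let $h_1,h_2$ be flow graphs with the same node set $X$ whose edge functions are all continuous and distributive. Then $\mathsf{tf}(h_1)=\mathsf{tf}(h_2)$ if and only if full path replacement of $h_1$ by $h_2$ and full path replacement of $h_2$ by $h_1$ both hold.
   Context: A flow monoid is a commutative monoid $(\mathbb{M},+,0)$ such that $n\le m :\iff \exists o.\ m=n+o$ is a partial order in which every ascending chain $K$ has a least upper bound $\bigsqcup K$, and $n+\bigsqcup K=\bigsqcup(n+K)$. Addition is idempotent if $m+m=m$ for all $m$. A function is continuous if it commutes with least upper bounds of ascending chains, and distributive if $f(m+n)=f(m)+f(n)$ and $f(0)=0$. Infinite sums denote least upper bounds of finite partial sums; sums and $\le$ on functions are pointwise. A flow graph is $h=(X,E,\mathit{in})$ with $X\subseteq\mathbb{N}$ finite, $E:X\times\mathbb{N}\to$ continuous functions $\mathbb{M}\to\mathbb{M}$, $\mathit{in}:(\mathbb{N}\setminus X)\times X\to\mathbb{M}$; $\mathit{in}_x=\sum_{y\notin X}\mathit{in}(y,x)$; the flow is the least $\mathit{flow}:X\to\mathbb{M}$ with $\mathit{flow}(x)=\mathit{in}_x+\sum_{y\in X}E(y,x)(\mathit{flow}(y))$; outflow $\mathit{out}(x,y)=E(x,y)(\mathit{flow}(x))$ for $x\in X$, $y\notin X$. The transfer function $\mathsf{tf}(h)$ maps each inflow $\mathit{in}'$ to the outflow of $(X,E,\mathit{in}')$; $\mathsf{tf}(h_1)=\mathsf{tf}(h_2)$ means equality for all inflows. A path through $h$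 is $p=x_0\cdots x_nz$ with $x_i\in X$, $z\in\mathbb{N}\setminus X$; $\mathrm{Paths}_h(x\to(y,z))$ is the set of such paths with $x_0=x$, $x_n=y$, final element $z$; $E_p=E(x_n,z)\circ E(x_{n-1},x_n)\circ\cdots\circ E(x_0,x_1)$; for a set of paths $P$, $E_P=\sum_{q\in P}E_q$. Full path replacement of $h_1$ by $h_2$: for every $x\in X$, $y\in X$, $z\in\mathbb{N}\setminus X$ and every $p\in\mathrm{Paths}_{h_1}(x\to(y,z))$ there is $P\subseteq\mathrm{Paths}_{h_2}(x\to(y,z))$ with $E_p\le E_P$. *)

theory Defs
  imports Main
begin

definition fm_le :: "'m::comm_monoid_add \<Rightarrow> 'm \<Rightarrow> bool" where
  "fm_le n m \<longleftrightarrow> (\<exists>d. m = n + d)"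

definition fm_is_lub :: "'m::comm_monoid_add set \<Rightarrow> 'm \<Rightarrow> bool" where
  "fm_is_lub K l \<longleftrightarrow> (\<forall>k\<in>K. fm_le k l) \<and> (\<forall>u. (\<forall>k\<in>K. fm_le k u) \<longrightarrow> fm_le l u)"

definition fm_lub :: "'m::comm_monoid_add set \<Rightarrow> 'm" where
  "fm_lub K = (THE l. fm_is_lub K l)"

definition fm_ascending :: "(nat \<Rightarrow> 'm::comm_monoid_add) \<Rightarrow> bool" where
  "fm_ascending k \<longleftrightarrow> (\<forall>i. fm_le (k i) (k (Suc i)))"

definition flow_monoid :: "'m::comm_monoid_add itself \<Rightarrow> bool" where
  "flow_monoid _ \<longleftrightarrow>
     (\<forall>a::'m. fm_le a a) \<and>
     (\<forall>a b c::'m. fm_le a b \<longrightarrow> fm_le b c \<longrightarrow> fm_le a c) \<and>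
     (\<forall>a b::'m. fm_le a b \<longrightarrow> fm_le b a \<longrightarrow> a = b) \<and>
     (\<forall>k::nat \<Rightarrow> 'm. fm_ascending k \<longrightarrow>
        (\<exists>l. fm_is_lub (range k) l) \<and>
        (\<forall>n. fm_is_lub (range (\<lambda>i. n + k i)) (n + fm_lub (range k))))"

definition idempotent_add :: "'m::comm_monoid_add itself \<Rightarrow> bool" where
  "idempotent_add _ \<longleftrightarrow> (\<forall>m::'m. m + m = m)"

definition fm_continuous :: "('m::comm_monoid_add \<Rightarrow> 'm) \<Rightarrow> bool" where
  "fm_continuous f \<longleftrightarrow>
     (\<forall>k. fm_ascending k \<longrightarrow> fm_is_lub (range (\<lambda>i. f (k i))) (f (fm_lub (range k))))"

definition fm_distributive :: "('m::comm_monoid_add \<Rightarrow> 'm) \<Rightarrow> bool" where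
  "fm_distributive f \<longleftrightarrow> (\<forall>m n. f (m + n) = f m + f n) \<and> f 0 = 0"

definition fm_sum :: "('a \<Rightarrow> 'm::comm_monoid_add) \<Rightarrow> 'a set \<Rightarrow> 'm" where
  "fm_sum f A = fm_lub {sum f F | F. finite F \<and> F \<subseteq> A}"

text \<open>A flow graph is given by X (finite set of nat), E :: nat => nat => ('m => 'm),
  and inflow ifl :: nat => nat => 'm, where only ifl y x with y \<notin> X, x \<in> X matters.\<close>

definition flow_graph :: "nat set \<Rightarrow> (nat \<Rightarrow> nat \<Rightarrow> 'm::comm_monoid_add \<Rightarrow> 'm) \<Rightarrow> bool" where
  "flow_graph X E \<longleftrightarrow> finite X \<and> (\<forall>x\<in>X. \<forall>y. fm_continuous (E x y))"

definition inflow_at :: "nat set \<Rightarrow> (nat \<Rightarrow> nat \<Rightarrow> 'm::comm_monoid_add) \<Rightarrow> nat \<Rightarrow> 'm" where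
  "inflow_at X ifl x = fm_sum (\<lambda>y. ifl y x) (- X)"

definition flow_eq :: "nat set \<Rightarrow> (nat \<Rightarrow> nat \<Rightarrow> 'm::comm_monoid_add \<Rightarrow> 'm)
    \<Rightarrow> (nat \<Rightarrow> nat \<Rightarrow> 'm) \<Rightarrow> (nat \<Rightarrow> 'm) \<Rightarrow> bool" where
  "flow_eq X E ifl fl \<longleftrightarrow>
     (\<forall>x\<in>X. fl x = inflow_at X ifl x + (\<Sum>y\<in>X. E y x (fl y)))"

definition is_flow :: "nat set \<Rightarrow> (nat \<Rightarrow> nat \<Rightarrow> 'm::comm_monoid_add \<Rightarrow> 'm)
    \<Rightarrow> (nat \<Rightarrow> nat \<Rightarrow> 'm) \<Rightarrow> (nat \<Rightarrow> 'm) \<Rightarrow> bool" where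
  "is_flow X E ifl fl \<longleftrightarrow> flow_eq X E ifl fl \<and> (\<forall>x. x \<notin> X \<longrightarrow> fl x = 0) \<and>
     (\<forall>g. flow_eq X E ifl g \<longrightarrow> (\<forall>x\<in>X. fm_le (fl x) (g x)))"

definition flow :: "nat set \<Rightarrow> (nat \<Rightarrow> nat \<Rightarrow> 'm::comm_monoid_add \<Rightarrow> 'm)
    \<Rightarrow> (nat \<Rightarrow> nat \<Rightarrow> 'm) \<Rightarrow> nat \<Rightarrow> 'm" where
  "flow X E ifl = (THE fl. is_flow X E ifl fl)"

definition outflow :: "nat set \<Rightarrow> (nat \<Rightarrow> nat \<Rightarrow> 'm::comm_monoid_add \<Rightarrow> 'm)
    \<Rightarrow> (nat \<Rightarrow> nat \<Rightarrow> 'm) \<Rightarrow> nat \<Rightarrow> nat \<Rightarrow> 'm" where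
  "outflow X E ifl x y = (if x \<in> X \<and> y \<notin> X then E x y (flow X E ifl x) else 0)"

definition tf :: "nat set \<Rightarrow> (nat \<Rightarrow> nat \<Rightarrow> 'm::comm_monoid_add \<Rightarrow> 'm)
    \<Rightarrow> (nat \<Rightarrow> nat \<Rightarrow> 'm) \<Rightarrow> nat \<Rightarrow> nat \<Rightarrow> 'm" where
  "tf X E = (\<lambda>ifl. outflow X E ifl)"

text \<open>A path x0 ... xn z is represented by the nonempty node list [x0,...,xn]
  together with its final element z.\<close>
definition paths :: "nat set \<Rightarrow> nat \<Rightarrow> nat \<Rightarrow> nat list set" where
  "paths X x y = {xs. xs \<noteq> [] \<and> set xs \<subseteq> X \<and> hd xs = x \<and> last xs = y}"

fun path_fun :: "(nat \<Rightarrow> nat \<Rightarrow> 'm \<Rightarrow> 'm) \<Rightarrow> nat list \<Rightarrow> nat \<Rightarrow> 'm \<Rightarrow> 'm" where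
  "path_fun E [] z = id"
| "path_fun E [x] z = E x z"
| "path_fun E (x # x' # xs) z = path_fun E (x' # xs) z \<circ> E x x'"

definition full_path_replacement :: "nat set \<Rightarrow> (nat \<Rightarrow> nat \<Rightarrow> 'm::comm_monoid_add \<Rightarrow> 'm)
    \<Rightarrow> (nat \<Rightarrow> nat \<Rightarrow> 'm \<Rightarrow> 'm) \<Rightarrow> bool" where
  "full_path_replacement X E1 E2 \<longleftrightarrow>
     (\<forall>x\<in>X. \<forall>y\<in>X. \<forall>z. z \<notin> X \<longrightarrow> (\<forall>p\<in>paths X x y.
        \<exists>P \<subseteq> paths X x y. \<forall>m. fm_le (path_fun E1 p z m) (fm_sum (\<lambda>q. path_fun E2 q z m) P)))"

end

theory Submission
  imports Defs "HOL-Library.Countable_Set"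
begin

text \<open>In an idempotent flow monoid with continuous distributive edge functions, the outflow
  along an edge (y, z) leaving the graph is the least upper bound of the contributions
  E_p(in_x) of all paths p = x \<dots> y z: the flow is the limit of its Kleene approximants, and
  by distributivity the n-th approximant is made up of contributions of paths of length
  below n. Full path replacement of h1 by h2 therefore bounds every path contribution of h1,
  hence the outflow of h1, by the outflow of h2; replacement in both directions gives equal
  transfer functions by antisymmetry. Conversely, if the transfer functions agree, inject m at
  a single node x: the contribution of a path p of h1 is below the common outflow, which is the
  sum over all paths of h2 starting in x, so all of these together replace p.\<close>

lemma fm_le_refl: "fm_le (a::'m::comm_monoid_add) a"
  unfolding fm_le_def by (rule exI[of _ 0]) simp

lemma fm_le_trans: "fm_le (a::'m::comm_monoid_add) b \<Longrightarrow> fm_le b c \<Longrightarrow> fm_le a c"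
  unfolding fm_le_def by (metis add.assoc)

lemma fm_zero_le: "fm_le 0 (a::'m::comm_monoid_add)"
  unfolding fm_le_def by auto

lemma fm_add_mono: "fm_le (a::'m::comm_monoid_add) b \<Longrightarrow> fm_le c d \<Longrightarrow> fm_le (a + c) (b + d)"
  unfolding fm_le_def by (metis add.assoc add.commute)

lemma fm_le_add_right: "fm_le (a::'m::comm_monoid_add) (a + b)"
  unfolding fm_le_def by auto

lemma fm_le_add_left: "fm_le (b::'m::comm_monoid_add) (a + b)"
  unfolding fm_le_def by (auto simp: add.commute)

lemma fm_antisym:
  "flow_monoid TYPE('m::comm_monoid_add) \<Longrightarrow> fm_le a b \<Longrightarrow> fm_le b a \<Longrightarrow> a = (b::'m)"
  unfolding flow_monoid_def by blast

lemma fm_add_le: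
  assumes I: "idempotent_add TYPE('m::comm_monoid_add)"
    and "fm_le (a::'m) c" "fm_le b c"
  shows "fm_le (a + b) c"
proof -
  obtain d e where "c = a + d" "c = b + e" using assms unfolding fm_le_def by blast
  have "c = c + c" using I unfolding idempotent_add_def by simp
  also have "\<dots> = (a + d) + (b + e)" using \<open>c = a + d\<close> \<open>c = b + e\<close> by simp
  also have "\<dots> = (a + b) + (d + e)" by (simp add: ac_simps)
  finally show ?thesis unfolding fm_le_def by blast
qed

lemma fm_sum_le:
  assumes "idempotent_add TYPE('m::comm_monoid_add)" "\<forall>i\<in>S. fm_le (f i) (c::'m)"
  shows "fm_le (sum f S) c"
  using assms(2)
  by (induction S rule: infinite_finite_induct) (simp_all add: fm_zero_le fm_add_le[OF assms(1)])

lemma fm_sum_subset_le: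
  assumes "finite G" "F \<subseteq> G"
  shows "fm_le (sum f F) (sum (f::'a \<Rightarrow> 'm::comm_monoid_add) G)"
proof -
  have "sum f G = sum f F + sum f (G - F)"
    using assms by (metis add.commute sum.subset_diff)
  then show ?thesis unfolding fm_le_def by blast
qed

lemma fm_le_sum: "finite S \<Longrightarrow> i \<in> S \<Longrightarrow> fm_le (f i) (sum (f::'a \<Rightarrow> 'm::comm_monoid_add) S)"
  using fm_sum_subset_le[of S "{i}" f] by simp

lemma fm_sum_mono:
  "\<forall>i\<in>S. fm_le (f i) (g i) \<Longrightarrow> fm_le (sum f S) (sum (g::'a \<Rightarrow> 'm::comm_monoid_add) S)"
  by (induction S rule: infinite_finite_induct) (simp_all add: fm_le_refl fm_add_mono)

lemma fm_ascending_le: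
  assumes "fm_ascending (k::nat \<Rightarrow> 'm::comm_monoid_add)" "i \<le> j"
  shows "fm_le (k i) (k j)"
  using assms(2)
proof (induction j)
  case 0 then show ?case by (simp add: fm_le_refl)
next
  case (Suc j)
  then show ?case
    using assms(1) fm_le_refl fm_le_trans le_Suc_eq unfolding fm_ascending_def by metis
qed

lemma fm_ascending_const: "fm_ascending (\<lambda>n. c :: 'm::comm_monoid_add)"
  unfolding fm_ascending_def by (simp add: fm_le_refl)

lemma fm_is_lubD1: "fm_is_lub K l \<Longrightarrow> k \<in> K \<Longrightarrow> fm_le k l"
  unfolding fm_is_lub_def by blast

lemma fm_is_lubD2: "fm_is_lub K l \<Longrightarrow> (\<And>k. k \<in> K \<Longrightarrow> fm_le k u) \<Longrightarrow> fm_le l u"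
  unfolding fm_is_lub_def by blast

lemma fm_is_lub_greatest: "m \<in> S \<Longrightarrow> \<forall>k\<in>S. fm_le k m \<Longrightarrow> fm_is_lub S m"
  unfolding fm_is_lub_def by blast

lemma fm_is_lub_const: "fm_is_lub (range (\<lambda>n::nat. c)) (c::'m::comm_monoid_add)"
  by (rule fm_is_lub_greatest) (auto simp: fm_le_refl)

lemma fm_is_lub_unique:
  "flow_monoid TYPE('m::comm_monoid_add) \<Longrightarrow> fm_is_lub K l \<Longrightarrow> fm_is_lub K l' \<Longrightarrow> l = (l'::'m)"
  unfolding fm_is_lub_def by (meson fm_antisym)

lemma fm_lub_eqI:
  "flow_monoid TYPE('m::comm_monoid_add) \<Longrightarrow> fm_is_lub K (l::'m) \<Longrightarrow> fm_lub K = l"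
  unfolding fm_lub_def by (rule the_equality) (auto dest: fm_is_lub_unique)

lemma fm_is_lub_chain:
  "flow_monoid TYPE('m::comm_monoid_add) \<Longrightarrow> fm_ascending (k::nat \<Rightarrow> 'm) \<Longrightarrow>
    fm_is_lub (range k) (fm_lub (range k))"
  unfolding flow_monoid_def using fm_lub_eqI[unfolded flow_monoid_def] by blast

lemma fm_is_lub_chain_add_left:
  "flow_monoid TYPE('m::comm_monoid_add) \<Longrightarrow> fm_ascending (k::nat \<Rightarrow> 'm) \<Longrightarrow>
    fm_is_lub (range (\<lambda>i. n + k i)) (n + fm_lub (range k))"
  unfolding flow_monoid_def by blast

lemma fm_is_lub_chain_Suc:
  assumes "fm_ascending a" "fm_is_lub (range (\<lambda>n. a (Suc n))) (l::'m::comm_monoid_add)"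
  shows "fm_is_lub (range a) l"
  unfolding fm_is_lub_def
proof (intro conjI allI impI ballI)
  fix k assume "k \<in> range a"
  then obtain n where "k = a n" by auto
  then show "fm_le k l"
    using assms fm_is_lubD1 fm_le_trans unfolding fm_ascending_def by blast
next
  fix u assume "\<forall>k\<in>range a. fm_le k u"
  then show "fm_le l u" using assms(2) by (auto intro: fm_is_lubD2)
qed

text \<open>Pass to the limit first in b, then in a.\<close>
lemma fm_is_lub_chain_add:
  assumes FM: "flow_monoid TYPE('m::comm_monoid_add)"
    and A: "fm_ascending (a::nat \<Rightarrow> 'm)" and B: "fm_ascending b"
  shows "fm_ascending (\<lambda>n. a n + b n)"
    and "fm_is_lub (range (\<lambda>n. a n + b n)) (fm_lub (range a) + fm_lub (range b))"
proof -
  show "fm_ascending (\<lambda>n. a n + b n)"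
    using A B unfolding fm_ascending_def by (simp add: fm_add_mono)
  let ?La = "fm_lub (range a)" and ?Lb = "fm_lub (range b)"
  have la: "fm_is_lub (range a) ?La" and lb: "fm_is_lub (range b) ?Lb"
    using fm_is_lub_chain[OF FM] A B by auto
  show "fm_is_lub (range (\<lambda>n. a n + b n)) (?La + ?Lb)"
    unfolding fm_is_lub_def
  proof (intro conjI allI impI ballI)
    fix k assume "k \<in> range (\<lambda>n. a n + b n)"
    then show "fm_le k (?La + ?Lb)"
      using fm_is_lubD1[OF la] fm_is_lubD1[OF lb] by (auto simp: fm_add_mono)
  next
    fix u assume U: "\<forall>k\<in>range (\<lambda>n. a n + b n). fm_le k u"
    have "fm_le (a i + b j) u" for i j
    proof -
      have "fm_le (a i + b j) (a (max i j) + b (max i j))"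
        using fm_ascending_le[OF A] fm_ascending_le[OF B] by (simp add: fm_add_mono)
      then show ?thesis using U by (meson fm_le_trans rangeI)
    qed
    then have "fm_le (a i + ?Lb) u" for i
      by (intro fm_is_lubD2[OF fm_is_lub_chain_add_left[OF FM B]]) auto
    then have "fm_le (?Lb + ?La) u"
      by (intro fm_is_lubD2[OF fm_is_lub_chain_add_left[OF FM A]]) (auto simp: add.commute)
    then show "fm_le (?La + ?Lb) u" by (simp add: add.commute)
  qed
qed

lemma fm_is_lub_chain_sum:
  assumes FM: "flow_monoid TYPE('m::comm_monoid_add)"
  shows "finite S \<Longrightarrow> \<forall>u\<in>S. fm_ascending (c u :: nat \<Rightarrow> 'm) \<Longrightarrow>
    fm_ascending (\<lambda>n. \<Sum>u\<in>S. c u n) \<and>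
    fm_is_lub (range (\<lambda>n. \<Sum>u\<in>S. c u n)) (\<Sum>u\<in>S. fm_lub (range (c u)))"
proof (induction S rule: finite_induct)
  case empty
  show ?case using fm_ascending_const[of 0] fm_is_lub_const[of 0] by simp
next
  case (insert x F)
  then have a: "fm_ascending (c x)" and b: "fm_ascending (\<lambda>n. \<Sum>u\<in>F. c u n)"
    and lb: "fm_is_lub (range (\<lambda>n. \<Sum>u\<in>F. c u n)) (\<Sum>u\<in>F. fm_lub (range (c u)))" by auto
  show ?case
    using fm_is_lub_chain_add[OF FM a b] fm_lub_eqI[OF FM lb] insert.hyps by simp
qed

text \<open>fm_sum is a definite description, meaningful only where the supremum exists. For countable
  A it does: the partial sums along an enumeration of A form a chain that is cofinal among all
  finite partial sums.\<close>
lemma fm_sum_is_lub: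
  assumes FM: "flow_monoid TYPE('m::comm_monoid_add)" and C: "countable A"
  shows "fm_is_lub {sum f F |F. finite F \<and> F \<subseteq> A} (fm_sum (f :: 'a \<Rightarrow> 'm) A)"
proof -
  let ?S = "{sum f F |F. finite F \<and> F \<subseteq> A}"
  have "\<exists>l. fm_is_lub ?S l"
  proof (cases "A = {}")
    case True
    then have "?S = {0}" by simp
    then show ?thesis using fm_is_lub_greatest[of 0 "{0::'m}"] by (auto simp: fm_le_refl)
  next
    case False
    define s where "s = from_nat_into A"
    have rs: "range s = A" unfolding s_def using range_from_nat_into[OF False C] .
    define c where "c n = sum f (s ` {..<n})" for n
    have asc: "fm_ascending c"
      unfolding fm_ascending_def c_def
      by (intro allI fm_sum_subset_le) (simp_all add: lessThan_Suc subset_insertI)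
    have l: "fm_is_lub (range c) (fm_lub (range c))" using fm_is_lub_chain[OF FM asc] .
    have "fm_is_lub ?S (fm_lub (range c))"
      unfolding fm_is_lub_def
    proof (intro conjI allI impI ballI)
      fix k assume "k \<in> ?S"
      then obtain F where F: "k = sum f F" "finite F" "F \<subseteq> A" by blast
      then have "F \<subseteq> s ` UNIV" using rs by simp
      with finite_subset_image[OF F(2) this] obtain D where D: "finite D" "F = s ` D" by auto
      obtain N where "D \<subseteq> {..<N}" using finite_nat_bounded[OF D(1)] by blast
      then have "fm_le k (c N)" unfolding c_def F(1) D(2) by (intro fm_sum_subset_le) auto
      then show "fm_le k (fm_lub (range c))" using fm_le_trans fm_is_lubD1[OF l rangeI] by blast
    next
      fix u assume "\<forall>k\<in>?S. fm_le k u"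
      moreover have "c n \<in> ?S" for n
      proof -
        have "finite (s ` {..<n})" "s ` {..<n} \<subseteq> A" using rs by auto
        then show ?thesis unfolding c_def by blast
      qed
      ultimately show "fm_le (fm_lub (range c)) u" by (intro fm_is_lubD2[OF l]) auto
    qed
    then show ?thesis by blast
  qed
  then obtain l where "fm_is_lub ?S l" by blast
  then show ?thesis unfolding fm_sum_def using fm_lub_eqI[OF FM] by simp
qed

lemma fm_le_fm_sum:
  assumes "flow_monoid TYPE('m::comm_monoid_add)" "countable A" "a \<in> A"
  shows "fm_le (f a) (fm_sum (f :: 'a \<Rightarrow> 'm) A)"
proof (rule fm_is_lubD1[OF fm_sum_is_lub[OF assms(1,2)]])
  have "f a = sum f {a}" "finite {a}" "{a} \<subseteq> A" using assms(3) by simp_all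
  then show "f a \<in> {sum f F |F. finite F \<and> F \<subseteq> A}" by blast
qed

lemma fm_sum_le_bound:
  assumes "flow_monoid TYPE('m::comm_monoid_add)" "idempotent_add TYPE('m)" "countable A"
    and "\<forall>a\<in>A. fm_le (f a) (u::'m)"
  shows "fm_le (fm_sum f A) u"
proof (rule fm_is_lubD2[OF fm_sum_is_lub[OF assms(1,3)]])
  fix k assume "k \<in> {sum f F |F. finite F \<and> F \<subseteq> A}"
  then obtain F where "k = sum f F" "F \<subseteq> A" by blast
  then show "fm_le k u" using fm_sum_le[OF assms(2), of F f u] assms(4) by blast
qed

subsection \<open>Flow graphs with continuous distributive edges\<close>

lemma fm_distributive_mono:
  "fm_distributive f \<Longrightarrow> fm_le a b \<Longrightarrow> fm_le (f a) (f (b::'m::comm_monoid_add))"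
  unfolding fm_distributive_def fm_le_def by auto

lemma fm_distributive_zero: "fm_distributive f \<Longrightarrow> f 0 = (0::'m::comm_monoid_add)"
  unfolding fm_distributive_def by auto

lemma fm_distributive_sum:
  "fm_distributive (f::'m::comm_monoid_add \<Rightarrow> 'm) \<Longrightarrow> f (sum g S) = (\<Sum>i\<in>S. f (g i))"
  by (induction S rule: infinite_finite_induct)
    (simp_all add: fm_distributive_zero, simp add: fm_distributive_def)

lemma fm_distributive_comp: "fm_distributive f \<Longrightarrow> fm_distributive g \<Longrightarrow> fm_distributive (f \<circ> g)"
  unfolding fm_distributive_def by simp

definition distributive_flow_graph :: "nat set \<Rightarrow> (nat \<Rightarrow> nat \<Rightarrow> 'm::comm_monoid_add \<Rightarrow> 'm) \<Rightarrow> bool"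
  where "distributive_flow_graph X E \<longleftrightarrow>
    finite X \<and> (\<forall>x\<in>X. \<forall>y. fm_continuous (E x y) \<and> fm_distributive (E x y))"

lemma distributive_flow_graphD:
  assumes "distributive_flow_graph X E"
  shows "finite X" and "x \<in> X \<Longrightarrow> fm_continuous (E x y)" and "x \<in> X \<Longrightarrow> fm_distributive (E x y)"
  using assms unfolding distributive_flow_graph_def by auto

definition flow_step :: "nat set \<Rightarrow> (nat \<Rightarrow> nat \<Rightarrow> 'm::comm_monoid_add \<Rightarrow> 'm)
    \<Rightarrow> (nat \<Rightarrow> nat \<Rightarrow> 'm) \<Rightarrow> (nat \<Rightarrow> 'm) \<Rightarrow> nat \<Rightarrow> 'm" where
  "flow_step X E ifl fl v = (if v \<in> X then inflow_at X ifl v + (\<Sum>u\<in>X. E u v (fl u)) else 0)"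

definition flow_approx :: "nat set \<Rightarrow> (nat \<Rightarrow> nat \<Rightarrow> 'm::comm_monoid_add \<Rightarrow> 'm)
    \<Rightarrow> (nat \<Rightarrow> nat \<Rightarrow> 'm) \<Rightarrow> nat \<Rightarrow> nat \<Rightarrow> 'm" where
  "flow_approx X E ifl n = (flow_step X E ifl ^^ n) (\<lambda>_. 0)"

lemma flow_approx_0 [simp]: "flow_approx X E ifl 0 = (\<lambda>_. 0)"
  by (simp add: flow_approx_def)

lemma flow_approx_Suc [simp]: "flow_approx X E ifl (Suc n) = flow_step X E ifl (flow_approx X E ifl n)"
  by (simp add: flow_approx_def)

lemma flow_approx_outside: "v \<notin> X \<Longrightarrow> flow_approx X E ifl n v = 0"
  by (cases n) (simp_all add: flow_step_def)

lemma flow_step_fixpoint: "flow_eq X E ifl g \<Longrightarrow> v \<in> X \<Longrightarrow> flow_step X E ifl g v = g v"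
  unfolding flow_eq_def flow_step_def by simp

lemma flow_step_mono:
  assumes "distributive_flow_graph X E" "\<forall>u\<in>X. fm_le (f u) (g u)"
  shows "fm_le (flow_step X E ifl f v) (flow_step X E ifl g v)"
proof -
  have "\<forall>u\<in>X. fm_le (E u v (f u)) (E u v (g u))"
    using assms fm_distributive_mono distributive_flow_graphD(3) by blast
  then show ?thesis
    unfolding flow_step_def by (simp add: fm_sum_mono fm_add_mono fm_le_refl)
qed

lemma flow_approx_ascending:
  assumes "distributive_flow_graph X E"
  shows "fm_ascending (\<lambda>n. flow_approx X E ifl n v)"
proof -
  have "\<forall>v. fm_le (flow_approx X E ifl n v) (flow_approx X E ifl (Suc n) v)" for n
    by (induction n) (simp_all add: fm_zero_le flow_step_mono[OF assms])
  then show ?thesis unfolding fm_ascending_def by blast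
qed

lemma flow_approx_le_solution:
  assumes "distributive_flow_graph X E" "flow_eq X E ifl g" "v \<in> X"
  shows "fm_le (flow_approx X E ifl n v) (g v)"
  using assms(3)
proof (induction n arbitrary: v)
  case 0 then show ?case by (simp add: fm_zero_le)
next
  case (Suc n)
  then show ?case
    using flow_step_mono[OF assms(1), of "flow_approx X E ifl n" g ifl v]
      flow_step_fixpoint[OF assms(2) Suc.prems] by simp
qed

lemma flow_step_continuous:
  assumes FM: "flow_monoid TYPE('m::comm_monoid_add)"
    and G: "distributive_flow_graph X (E :: nat \<Rightarrow> nat \<Rightarrow> 'm \<Rightarrow> 'm)"
    and asc: "\<And>u. fm_ascending (\<lambda>n. f n u)" and v: "v \<in> X"
  shows "fm_is_lub (range (\<lambda>n. flow_step X E ifl (f n) v))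
           (flow_step X E ifl (\<lambda>u. fm_lub (range (\<lambda>n. f n u))) v)"
proof -
  define c where "c u n = E u v (f n u)" for u n
  have c_asc: "\<forall>u\<in>X. fm_ascending (c u)"
    using asc distributive_flow_graphD(3)[OF G] fm_distributive_mono
    unfolding c_def fm_ascending_def by blast
  have c_lub: "fm_lub (range (c u)) = E u v (fm_lub (range (\<lambda>n. f n u)))" if "u \<in> X" for u
    using fm_lub_eqI[OF FM] distributive_flow_graphD(2)[OF G that] asc
    unfolding c_def fm_continuous_def by blast
  obtain sum_asc: "fm_ascending (\<lambda>n. \<Sum>u\<in>X. c u n)"
    and sum_lub: "fm_is_lub (range (\<lambda>n. \<Sum>u\<in>X. c u n)) (\<Sum>u\<in>X. fm_lub (range (c u)))"
    using fm_is_lub_chain_sum[OF FM distributive_flow_graphD(1)[OF G] c_asc] by blast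
  have "fm_is_lub (range (\<lambda>n. inflow_at X ifl v + (\<Sum>u\<in>X. c u n)))
      (inflow_at X ifl v + (\<Sum>u\<in>X. fm_lub (range (c u))))"
    using fm_is_lub_chain_add_left[OF FM sum_asc] fm_lub_eqI[OF FM sum_lub] by simp
  then show ?thesis
    using v c_lub by (simp add: flow_step_def c_def cong: sum.cong)
qed

lemma is_flow_lub_flow_approx:
  assumes FM: "flow_monoid TYPE('m::comm_monoid_add)"
    and G: "distributive_flow_graph X (E :: nat \<Rightarrow> nat \<Rightarrow> 'm \<Rightarrow> 'm)"
  shows "is_flow X E ifl (\<lambda>v. fm_lub (range (\<lambda>n. flow_approx X E ifl n v)))"
proof -
  define L where "L v = fm_lub (range (\<lambda>n. flow_approx X E ifl n v))" for v
  have asc: "fm_ascending (\<lambda>n. flow_approx X E ifl n v)" for v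
    using flow_approx_ascending[OF G] .
  have L_lub: "fm_is_lub (range (\<lambda>n. flow_approx X E ifl n v)) (L v)" for v
    unfolding L_def using fm_is_lub_chain[OF FM asc] .
  have "L v = flow_step X E ifl L v" if "v \<in> X" for v
  proof -
    have "fm_is_lub (range (\<lambda>n. flow_approx X E ifl (Suc n) v)) (flow_step X E ifl L v)"
      using flow_step_continuous[OF FM G asc that] unfolding L_def by simp
    then show ?thesis
      using fm_is_lub_unique[OF FM L_lub fm_is_lub_chain_Suc[OF asc]] by blast
  qed
  then have "flow_eq X E ifl L"
    unfolding flow_eq_def flow_step_def by auto
  moreover have "L v = 0" if "v \<notin> X" for v
    unfolding L_def flow_approx_outside[OF that]
    using fm_lub_eqI[OF FM fm_is_lub_const[of 0]] by simp
  moreover have "fm_le (L v) (g v)" if "flow_eq X E ifl g" "v \<in> X" for g v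
    using fm_is_lubD2[OF L_lub] flow_approx_le_solution[OF G that] by blast
  ultimately show ?thesis
    unfolding is_flow_def L_def by blast
qed

lemma is_flow_unique:
  assumes "flow_monoid TYPE('m::comm_monoid_add)"
    and "is_flow X E ifl (f :: nat \<Rightarrow> 'm)" "is_flow X E ifl g"
  shows "f = g"
proof
  fix v show "f v = g v"
    using assms fm_antisym[OF assms(1)] unfolding is_flow_def by (cases "v \<in> X") auto
qed

lemma flow_eq_lub_flow_approx:
  assumes "flow_monoid TYPE('m::comm_monoid_add)"
    and "distributive_flow_graph X (E :: nat \<Rightarrow> nat \<Rightarrow> 'm \<Rightarrow> 'm)"
  shows "flow X E ifl = (\<lambda>v. fm_lub (range (\<lambda>n. flow_approx X E ifl n v)))"
  unfolding flow_def
proof (rule the_equality)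
  show "is_flow X E ifl (\<lambda>v. fm_lub (range (\<lambda>n. flow_approx X E ifl n v)))"
    using is_flow_lub_flow_approx[OF assms] .
  then show "\<And>f. is_flow X E ifl f \<Longrightarrow> f = (\<lambda>v. fm_lub (range (\<lambda>n. flow_approx X E ifl n v)))"
    using is_flow_unique[OF assms(1)] by blast
qed

lemma flow_eq_flow:
  assumes "flow_monoid TYPE('m::comm_monoid_add)"
    and "distributive_flow_graph X (E :: nat \<Rightarrow> nat \<Rightarrow> 'm \<Rightarrow> 'm)"
  shows "flow_eq X E ifl (flow X E ifl)"
  using is_flow_lub_flow_approx[OF assms] flow_eq_lub_flow_approx[OF assms]
  unfolding is_flow_def by simp

subsection \<open>Paths\<close>

fun inner_path_fun :: "(nat \<Rightarrow> nat \<Rightarrow> 'm \<Rightarrow> 'm) \<Rightarrow> nat list \<Rightarrow> 'm \<Rightarrow> 'm" where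
  "inner_path_fun E [] = id"
| "inner_path_fun E [x] = id"
| "inner_path_fun E (x # x' # xs) = inner_path_fun E (x' # xs) \<circ> E x x'"

lemma path_fun_eq_inner_path_fun:
  "p \<noteq> [] \<Longrightarrow> path_fun E p z = E (last p) z \<circ> inner_path_fun E p"
  by (induction p rule: induct_list012) (simp_all add: comp_assoc)

lemma inner_path_fun_snoc:
  "p \<noteq> [] \<Longrightarrow> inner_path_fun E (p @ [v]) = E (last p) v \<circ> inner_path_fun E p"
  by (induction p rule: induct_list012) (simp_all add: comp_assoc)

lemma path_fun_zero:
  assumes "distributive_flow_graph X (E :: nat \<Rightarrow> nat \<Rightarrow> 'm::comm_monoid_add \<Rightarrow> 'm)"
    and "p \<noteq> []" "set p \<subseteq> X"
  shows "path_fun E p z 0 = 0"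
proof -
  have E_zero: "x \<in> X \<Longrightarrow> E x y 0 = 0" for x y
    using fm_distributive_zero distributive_flow_graphD(3)[OF assms(1)] by blast
  have "inner_path_fun E p 0 = 0"
    using assms(3) by (induction p rule: induct_list012) (simp_all add: E_zero)
  moreover have "last p \<in> X" using assms(2,3) by auto
  ultimately show ?thesis by (simp add: path_fun_eq_inner_path_fun[OF assms(2)] E_zero)
qed

lemma inflow_le_solution: "flow_eq X E ifl fl \<Longrightarrow> x \<in> X \<Longrightarrow> fm_le (inflow_at X ifl x) (fl x)"
  unfolding flow_eq_def by (simp add: fm_le_add_right)

lemma edge_le_solution:
  assumes "flow_eq X E ifl fl" "finite X" "x \<in> X" "y \<in> X"
  shows "fm_le (E x y (fl x)) (fl y)"
proof -
  have "fm_le (E x y (fl x)) (\<Sum>u\<in>X. E u y (fl u))" using fm_le_sum assms(2,3) by fast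
  moreover have "fm_le (\<Sum>u\<in>X. E u y (fl u)) (fl y)"
    using assms(1,4) unfolding flow_eq_def by (simp add: fm_le_add_left)
  ultimately show ?thesis by (rule fm_le_trans)
qed

lemma inner_path_fun_le_solution:
  assumes G: "distributive_flow_graph X E" and fl: "flow_eq X E ifl fl"
  shows "p \<noteq> [] \<Longrightarrow> set p \<subseteq> X \<Longrightarrow> fm_le a (fl (hd p)) \<Longrightarrow>
    fm_le (inner_path_fun E p a) (fl (last p))"
proof (induction p arbitrary: a rule: induct_list012)
  case (3 x y zs)
  then have "x \<in> X" "y \<in> X" by auto
  then have "fm_le (E x y a) (fl y)"
    using 3 fm_distributive_mono[OF distributive_flow_graphD(3)[OF G]]
      edge_le_solution[OF fl distributive_flow_graphD(1)[OF G]] fm_le_trans by fastforce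
  then show ?case using 3 by simp
qed simp_all

text \<open>The continuation \<open>\<phi>\<close> grows by one edge at each unfolding of the approximation,
  turning paths ending in w into paths ending in v.\<close>
lemma flow_approx_le_path_bound:
  assumes I: "idempotent_add TYPE('m::comm_monoid_add)"
    and G: "distributive_flow_graph X (E :: nat \<Rightarrow> nat \<Rightarrow> 'm \<Rightarrow> 'm)"
  shows "\<forall>x\<in>X. \<forall>p\<in>paths X x v. fm_le (\<phi> (inner_path_fun E p (inflow_at X ifl x))) u \<Longrightarrow>
    fm_distributive \<phi> \<Longrightarrow> v \<in> X \<Longrightarrow> fm_le (\<phi> (flow_approx X E ifl n v)) u"
proof (induction n arbitrary: \<phi> v)
  case 0 then show ?case by (simp add: fm_distributive_zero fm_zero_le)
next
  case (Suc n)
  have "\<phi> (flow_approx X E ifl (Suc n) v) =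
      \<phi> (inflow_at X ifl v) + \<phi> (\<Sum>w\<in>X. E w v (flow_approx X E ifl n w))"
    using Suc.prems(2,3) by (simp add: flow_step_def fm_distributive_def)
  also have "\<dots> = \<phi> (inflow_at X ifl v) + (\<Sum>w\<in>X. (\<phi> \<circ> E w v) (flow_approx X E ifl n w))"
    using fm_distributive_sum[OF Suc.prems(2), of "\<lambda>w. E w v (flow_approx X E ifl n w)" X] by simp
  finally have unfold: "\<phi> (flow_approx X E ifl (Suc n) v) =
      \<phi> (inflow_at X ifl v) + (\<Sum>w\<in>X. (\<phi> \<circ> E w v) (flow_approx X E ifl n w))" .
  have "[v] \<in> paths X v v" using Suc.prems(3) unfolding paths_def by simp
  then have inflow: "fm_le (\<phi> (inflow_at X ifl v)) u" using Suc.prems(1,3) by fastforce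
  have "fm_le ((\<phi> \<circ> E w v) (flow_approx X E ifl n w)) u" if w: "w \<in> X" for w
  proof (rule Suc.IH)
    show "fm_distributive (\<phi> \<circ> E w v)"
      using fm_distributive_comp Suc.prems(2) distributive_flow_graphD(3)[OF G w] by blast
    show "\<forall>x\<in>X. \<forall>p\<in>paths X x w. fm_le ((\<phi> \<circ> E w v) (inner_path_fun E p (inflow_at X ifl x))) u"
    proof (intro ballI)
      fix x p assume x: "x \<in> X" and p: "p \<in> paths X x w"
      then have "p @ [v] \<in> paths X x v" "inner_path_fun E (p @ [v]) = E w v \<circ> inner_path_fun E p"
        using Suc.prems(3) inner_path_fun_snoc[of p E v] unfolding paths_def by auto
      then show "fm_le ((\<phi> \<circ> E w v) (inner_path_fun E p (inflow_at X ifl x))) u"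
        using Suc.prems(1) x by (metis comp_apply)
    qed
  qed (rule w)
  then show ?case
    unfolding unfold by (intro fm_add_le[OF I] inflow fm_sum_le[OF I] ballI)
qed

definition path_contributions :: "nat set \<Rightarrow> (nat \<Rightarrow> nat \<Rightarrow> 'm::comm_monoid_add \<Rightarrow> 'm)
    \<Rightarrow> (nat \<Rightarrow> nat \<Rightarrow> 'm) \<Rightarrow> nat \<Rightarrow> nat \<Rightarrow> 'm set" where
  "path_contributions X E ifl y z =
    {path_fun E p z (inflow_at X ifl x) | x p. x \<in> X \<and> p \<in> paths X x y}"

theorem outflow_is_lub_path_contributions:
  assumes FM: "flow_monoid TYPE('m::comm_monoid_add)" and I: "idempotent_add TYPE('m)"
    and G: "distributive_flow_graph X (E :: nat \<Rightarrow> nat \<Rightarrow> 'm \<Rightarrow> 'm)" and y: "y \<in> X"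
  shows "fm_is_lub (path_contributions X E ifl y z) (E y z (flow X E ifl y))"
  unfolding fm_is_lub_def
proof (intro conjI allI impI ballI)
  have path_fun: "path_fun E p z = E y z \<circ> inner_path_fun E p" if "p \<in> paths X x y" for x p
    using that path_fun_eq_inner_path_fun[of p E z] unfolding paths_def by auto
  have E_mono: "fm_distributive (E y z)" using distributive_flow_graphD(3)[OF G y] .
  {
    fix k assume "k \<in> path_contributions X E ifl y z"
    then obtain x p where x: "x \<in> X" and p: "p \<in> paths X x y"
      and k: "k = path_fun E p z (inflow_at X ifl x)"
      unfolding path_contributions_def by blast
    have fl: "flow_eq X E ifl (flow X E ifl)" using flow_eq_flow[OF FM G] .
    have "fm_le (inner_path_fun E p (inflow_at X ifl x)) (flow X E ifl y)"
      using inner_path_fun_le_solution[OF G fl] inflow_le_solution[OF fl x] p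
      unfolding paths_def by auto
    then show "fm_le k (E y z (flow X E ifl y))"
      using k path_fun[OF p] fm_distributive_mono[OF E_mono] by simp
  }
  {
    fix u assume u: "\<forall>k\<in>path_contributions X E ifl y z. fm_le k u"
    have "fm_is_lub (range (\<lambda>n. E y z (flow_approx X E ifl n y))) (E y z (flow X E ifl y))"
      using distributive_flow_graphD(2)[OF G y] flow_approx_ascending[OF G]
      unfolding fm_continuous_def flow_eq_lub_flow_approx[OF FM G] by blast
    moreover have "fm_le (E y z (flow_approx X E ifl n y)) u" for n
    proof (rule flow_approx_le_path_bound[OF I G _ E_mono y], intro ballI)
      fix x p assume "x \<in> X" "p \<in> paths X x y"
      then show "fm_le (E y z (inner_path_fun E p (inflow_at X ifl x))) u"
        using u path_fun unfolding path_contributions_def by fastforce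
    qed
    ultimately show "fm_le (E y z (flow X E ifl y)) u" by (auto intro: fm_is_lubD2)
  }
qed

subsection \<open>Transfer functions and path replacement\<close>

lemma full_path_replacement_outflow_le:
  assumes FM: "flow_monoid TYPE('m::comm_monoid_add)" and I: "idempotent_add TYPE('m)"
    and G1: "distributive_flow_graph X (E1 :: nat \<Rightarrow> nat \<Rightarrow> 'm \<Rightarrow> 'm)"
    and G2: "distributive_flow_graph X E2"
    and R: "full_path_replacement X E1 E2" and y: "y \<in> X" and z: "z \<notin> X"
  shows "fm_le (E1 y z (flow X E1 ifl y)) (E2 y z (flow X E2 ifl y))"
proof (rule fm_is_lubD2[OF outflow_is_lub_path_contributions[OF FM I G1 y]])
  fix k assume "k \<in> path_contributions X E1 ifl y z"
  then obtain x p where x: "x \<in> X" and p: "p \<in> paths X x y"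
    and k: "k = path_fun E1 p z (inflow_at X ifl x)"
    unfolding path_contributions_def by blast
  obtain P where P: "P \<subseteq> paths X x y"
    and k_le: "fm_le k (fm_sum (\<lambda>q. path_fun E2 q z (inflow_at X ifl x)) P)"
    using R[unfolded full_path_replacement_def, rule_format, OF x y z p] k by blast
  have "fm_le (fm_sum (\<lambda>q. path_fun E2 q z (inflow_at X ifl x)) P) (E2 y z (flow X E2 ifl y))"
  proof (rule fm_sum_le_bound[OF FM I countableI_type], intro ballI)
    fix q assume "q \<in> P"
    then have "path_fun E2 q z (inflow_at X ifl x) \<in> path_contributions X E2 ifl y z"
      using P x unfolding path_contributions_def by blast
    then show "fm_le (path_fun E2 q z (inflow_at X ifl x)) (E2 y z (flow X E2 ifl y))"
      by (rule fm_is_lubD1[OF outflow_is_lub_path_contributions[OF FM I G2 y]])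
  qed
  with k_le show "fm_le k (E2 y z (flow X E2 ifl y))" by (rule fm_le_trans)
qed

definition point_inflow :: "nat \<Rightarrow> nat \<Rightarrow> 'm::comm_monoid_add \<Rightarrow> nat \<Rightarrow> nat \<Rightarrow> 'm" where
  "point_inflow w0 x m w v = (if w = w0 \<and> v = x then m else 0)"

lemma inflow_at_point_inflow:
  assumes FM: "flow_monoid TYPE('m::comm_monoid_add)" and w0: "w0 \<notin> X"
  shows "inflow_at X (point_inflow w0 x m) v = (if v = x then m else (0::'m))"
proof -
  let ?f = "\<lambda>w. point_inflow w0 x m w v"
  let ?S = "{sum ?f F |F. finite F \<and> F \<subseteq> - X}"
  have sum_f: "sum ?f F = (if v = x \<and> w0 \<in> F then m else 0)" if "finite F" for F
    using that unfolding point_inflow_def by (cases "v = x") (simp_all add: sum.delta)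
  have "(if v = x then m else 0) \<in> ?S"
    using sum_f[of "{w0}"] w0 by (intro CollectI exI[of _ "{w0}"]) auto
  moreover have "\<forall>k\<in>?S. fm_le k (if v = x then m else 0)"
    using sum_f by (auto simp: fm_le_refl fm_zero_le)
  ultimately have "fm_is_lub ?S (if v = x then m else 0)" by (rule fm_is_lub_greatest)
  then show ?thesis unfolding inflow_at_def fm_sum_def using fm_lub_eqI[OF FM] by simp
qed

lemma path_fun_le_point_outflow:
  assumes FM: "flow_monoid TYPE('m::comm_monoid_add)" and I: "idempotent_add TYPE('m)"
    and G: "distributive_flow_graph X (E :: nat \<Rightarrow> nat \<Rightarrow> 'm \<Rightarrow> 'm)"
    and w0: "w0 \<notin> X" and x: "x \<in> X" and y: "y \<in> X" and p: "p \<in> paths X x y"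
  shows "fm_le (path_fun E p z m) (E y z (flow X E (point_inflow w0 x m) y))"
proof (rule fm_is_lubD1[OF outflow_is_lub_path_contributions[OF FM I G y]])
  show "path_fun E p z m \<in> path_contributions X E (point_inflow w0 x m) y z"
    using x p inflow_at_point_inflow[OF FM w0, of x m x]
    unfolding path_contributions_def by force
qed

text \<open>Only paths starting in x contribute, and these are exactly the summands.\<close>
lemma point_outflow_le_fm_sum_paths:
  assumes FM: "flow_monoid TYPE('m::comm_monoid_add)" and I: "idempotent_add TYPE('m)"
    and G: "distributive_flow_graph X (E :: nat \<Rightarrow> nat \<Rightarrow> 'm \<Rightarrow> 'm)"
    and w0: "w0 \<notin> X" and y: "y \<in> X"
  shows "fm_le (E y z (flow X E (point_inflow w0 x m) y)) (fm_sum (\<lambda>q. path_fun E q z m) (paths X x y))"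
proof (rule fm_is_lubD2[OF outflow_is_lub_path_contributions[OF FM I G y]])
  fix k assume "k \<in> path_contributions X E (point_inflow w0 x m) y z"
  then obtain x' q where q: "q \<in> paths X x' y"
    and k: "k = path_fun E q z (inflow_at X (point_inflow w0 x m) x')"
    unfolding path_contributions_def by blast
  show "fm_le k (fm_sum (\<lambda>q. path_fun E q z m) (paths X x y))"
  proof (cases "x' = x")
    case True
    then show ?thesis
      using k q inflow_at_point_inflow[OF FM w0] fm_le_fm_sum[OF FM countableI_type] by simp
  next
    case False
    then show ?thesis
      using k q inflow_at_point_inflow[OF FM w0] path_fun_zero[OF G, of q z]
      unfolding paths_def by (simp add: fm_zero_le)
  qed
qed

lemma tf_eq_full_path_replacement:
  assumes FM: "flow_monoid TYPE('m::comm_monoid_add)" and I: "idempotent_add TYPE('m)"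
    and G1: "distributive_flow_graph X (E1 :: nat \<Rightarrow> nat \<Rightarrow> 'm \<Rightarrow> 'm)"
    and G2: "distributive_flow_graph X E2"
    and T: "tf X E1 = tf X E2"
  shows "full_path_replacement X E1 E2"
  unfolding full_path_replacement_def
proof (intro ballI allI impI)
  fix x y z p assume x: "x \<in> X" and y: "y \<in> X" and z: "z \<notin> X" and p: "p \<in> paths X x y"
  obtain w0 where w0: "w0 \<notin> X"
    using ex_new_if_finite[OF infinite_UNIV_nat distributive_flow_graphD(1)[OF G1]] by blast
  show "\<exists>P\<subseteq>paths X x y. \<forall>m. fm_le (path_fun E1 p z m) (fm_sum (\<lambda>q. path_fun E2 q z m) P)"
  proof (intro exI[of _ "paths X x y"] conjI allI subset_refl)
    fix m :: 'm
    let ?ifl = "point_inflow w0 x m"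
    have "tf X E1 ?ifl y z = tf X E2 ?ifl y z" using T by simp
    then have "E1 y z (flow X E1 ?ifl y) = E2 y z (flow X E2 ?ifl y)"
      using y z unfolding tf_def outflow_def by simp
    then show "fm_le (path_fun E1 p z m) (fm_sum (\<lambda>q. path_fun E2 q z m) (paths X x y))"
      using path_fun_le_point_outflow[OF FM I G1 w0 x y p, of z m]
        point_outflow_le_fm_sum_paths[OF FM I G2 w0 y, of z x m]
      by (metis fm_le_trans)
  qed
qed

theorem lemma7:
  fixes X :: "nat set"
    and E1 E2 :: "nat \<Rightarrow> nat \<Rightarrow> 'm::comm_monoid_add \<Rightarrow> 'm"
  assumes "flow_monoid TYPE('m)"
    and "idempotent_add TYPE('m)"
    and "flow_graph X E1" and "flow_graph X E2"
    and "\<forall>x\<in>X. \<forall>y. fm_continuous (E1 x y) \<and> fm_distributive (E1 x y)"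
    and "\<forall>x\<in>X. \<forall>y. fm_continuous (E2 x y) \<and> fm_distributive (E2 x y)"
  shows "tf X E1 = tf X E2 \<longleftrightarrow>
           full_path_replacement X E1 E2 \<and> full_path_replacement X E2 E1"
proof -
  have G1: "distributive_flow_graph X E1" and G2: "distributive_flow_graph X E2"
    using assms(3-6) unfolding distributive_flow_graph_def flow_graph_def by blast+
  show ?thesis
  proof
    assume "tf X E1 = tf X E2"
    then show "full_path_replacement X E1 E2 \<and> full_path_replacement X E2 E1"
      using tf_eq_full_path_replacement[OF assms(1,2)] G1 G2 by simp
  next
    assume R: "full_path_replacement X E1 E2 \<and> full_path_replacement X E2 E1"
    have "E1 y z (flow X E1 ifl y) = E2 y z (flow X E2 ifl y)" if "y \<in> X" "z \<notin> X" for ifl y z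
      using R full_path_replacement_outflow_le[OF assms(1,2) G1 G2 _ that]
        full_path_replacement_outflow_le[OF assms(1,2) G2 G1 _ that]
      by (intro fm_antisym[OF assms(1)]) simp_all
    then show "tf X E1 = tf X E2" unfolding tf_def outflow_def by (intro ext) auto
  qed
qed

end
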